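(* The set $X^{\mathcal B}=\{x^{\mathbf b}:\mathbf b\in\mathcal B\}$ is a basis of the $\mathbb C$-vector space $\mathcal W_0$.
   Context: Let $A=\{\mathbf a_1,\dots,\mathbf a_m\}\subseteq\mathbb Z^n$ be linearly independent over $\mathbb R$ and $\ell_1,\dots,\ell_m$ positive integers (part of a relation $\ell_0\mathbf a_0=\sum_j\ell_j\mathbf a_j$, $\ell_0=\sum_j\ell_j$, $\mathbf a_0\in\mathbb Z^n$, $\gcd(\ell_0,\dots,\ell_m)=1$). Let $f_0=\sum_{j=1}^m\ell_jx^{\mathbf a_j}$. Let $V$ be the real span of $A$, $V_{\mathbb Z}=V\cap\mathbb Z^n$, $C(A)$ the real cone generated by $A$, $M=V_{\mathbb Z}\cap C(A)$. Let $S_0$ be the $\mathbb C$-span of $\{x^u:u\in M\}$, $D_{i,0}=x_i\partial/\partial x_i+x_i\partial f_0/\partial x_i$ ($i=1,\dots,n$), and $\mathcal W_0=S_0/\sum_iD_{i,0}S_0$. Let $P(A)=\{\sum_jc_j\mathbf a_j:0\le c_j<1\}$ and $\mathcal B=V_{\mathbb Z}\cap P(A)$. *)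

theory Defs
  imports "HOL-Analysis.Analysis"
begin

text \<open>Exponent vectors live in int^'n (n = CARD('n)); the vectors a_1..a_m are
  given by a :: nat => int^'n on the index set {1..m}. Laurent polynomials are
  finitely supported coefficient functions int^'n => complex.\<close>

definition realvec :: "int^'n \<Rightarrow> real^'n" where
  "realvec u = (\<chi> i. real_of_int (u $ i))"

definition lin_indep_family :: "nat \<Rightarrow> (nat \<Rightarrow> int^'n) \<Rightarrow> bool" where
  "lin_indep_family m a \<longleftrightarrow>
     (\<forall>c::nat \<Rightarrow> real. (\<Sum>j=1..m. c j *\<^sub>R realvec (a j)) = 0 \<longrightarrow> (\<forall>j\<in>{1..m}. c j = 0))"

definition VZ :: "nat \<Rightarrow> (nat \<Rightarrow> int^'n) \<Rightarrow> (int^'n) set" where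
  "VZ m a = {u. realvec u \<in> span (realvec ` a ` {1..m})}"

definition coneA :: "nat \<Rightarrow> (nat \<Rightarrow> int^'n) \<Rightarrow> (real^'n) set" where
  "coneA m a = {v. \<exists>c::nat \<Rightarrow> real. (\<forall>j\<in>{1..m}. 0 \<le> c j) \<and> v = (\<Sum>j=1..m. c j *\<^sub>R realvec (a j))}"

definition parA :: "nat \<Rightarrow> (nat \<Rightarrow> int^'n) \<Rightarrow> (real^'n) set" where
  "parA m a = {v. \<exists>c::nat \<Rightarrow> real. (\<forall>j\<in>{1..m}. 0 \<le> c j \<and> c j < 1) \<and> v = (\<Sum>j=1..m. c j *\<^sub>R realvec (a j))}"

definition monoidM :: "nat \<Rightarrow> (nat \<Rightarrow> int^'n) \<Rightarrow> (int^'n) set" where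
  "monoidM m a = {u \<in> VZ m a. realvec u \<in> coneA m a}"

definition setB :: "nat \<Rightarrow> (nat \<Rightarrow> int^'n) \<Rightarrow> (int^'n) set" where
  "setB m a = {u \<in> VZ m a. realvec u \<in> parA m a}"

definition S0 :: "nat \<Rightarrow> (nat \<Rightarrow> int^'n) \<Rightarrow> (int^'n \<Rightarrow> complex) set" where
  "S0 m a = {g. finite {u. g u \<noteq> 0} \<and> {u. g u \<noteq> 0} \<subseteq> monoidM m a}"

definition mono :: "int^'n \<Rightarrow> (int^'n \<Rightarrow> complex)" where
  "mono b = (\<lambda>w. if w = b then 1 else 0)"

text \<open>D_{i,0} = x_i d/dx_i + x_i (d f_0/d x_i), f_0 = sum_j l_j x^{a_j}, acting on
  coefficient functions: the coefficient of x^w in D_{i,0} g is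
  w_i g(w) + sum_j l_j (a_j)_i g(w - a_j).\<close>
definition Dop :: "nat \<Rightarrow> (nat \<Rightarrow> int^'n) \<Rightarrow> (nat \<Rightarrow> nat) \<Rightarrow> 'n \<Rightarrow>
    (int^'n \<Rightarrow> complex) \<Rightarrow> (int^'n \<Rightarrow> complex)" where
  "Dop m a l i g = (\<lambda>w. of_int (w $ i) * g w
      + (\<Sum>j=1..m. of_nat (l j) * of_int (a j $ i) * g (w - a j)))"

definition Dsum :: "nat \<Rightarrow> (nat \<Rightarrow> int^'n) \<Rightarrow> (nat \<Rightarrow> nat) \<Rightarrow> (int^'n \<Rightarrow> complex) set" where
  "Dsum m a l = {(\<lambda>w. \<Sum>i\<in>UNIV. Dop m a l i (g i) w) | g. \<forall>i. g i \<in> S0 m a}"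

definition quotient_basis :: "(int^'n \<Rightarrow> complex) set \<Rightarrow> (int^'n \<Rightarrow> complex) set \<Rightarrow>
    (int^'n) set \<Rightarrow> bool" where
  "quotient_basis S R Bs \<longleftrightarrow> finite Bs \<and>
     (\<forall>g\<in>S. \<exists>c::int^'n \<Rightarrow> complex. (\<lambda>w. g w - (\<Sum>b\<in>Bs. c b * mono b w)) \<in> R) \<and>
     (\<forall>c::int^'n \<Rightarrow> complex. (\<lambda>w. \<Sum>b\<in>Bs. c b * mono b w) \<in> R \<longrightarrow> (\<forall>b\<in>Bs. c b = 0))"

end

(* Choose dual vectors y_k with a_j . y_k = delta_jk and let c_k(u) = u . y_k be the
   coordinates of u in V.  Then M and B consist of the lattice points of V with all
   c_k >= 0, resp. all c_k in [0,1), and B is finite.  The combination sum_i (y_k)_i D_i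
   acts as  g |-> c_k(deg) g + l_k x^(a_k) g,  so modulo the image of the D_i we have
   x^(u + a_k) = -(c_k(u)/l_k) x^u  for u in M; lowering the integer parts of the
   coordinates one step at a time reduces every monomial of S_0 to a multiple of some
   x^b with b in B.

   For independence fix b0 in B.  Every u in V_Z is b0 + sum_k n_k a_k for at most one
   choice of integers n_k; put  W(u) = prod_k (-1/l_k)^(n_k) (t_k)(t_k + 1)...(t_k + n_k - 1)
   with t_k = frac c_k(u) in that case, and W(u) = 0 otherwise.  W obeys the recursion
   W(u + a_k) = -(c_k(u)/l_k) W(u) on M, which together with u_i = sum_k c_k(u) (a_k)_i
   makes the pairing of W with every D_i x^u vanish; and W is 1 at b0 and 0 at the other
   points of B. *)

theory Submission
  imports Defs
begin

lemma realvec_nth [simp]: "realvec u $ i = real_of_int (u $ i)"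
  by (simp add: realvec_def)

lemma realvec_add: "realvec (u + v) = realvec u + realvec v"
  by (simp add: vec_eq_iff)

lemma realvec_diff: "realvec (u - v) = realvec u - realvec v"
  by (simp add: vec_eq_iff)

lemma VZ_diff_generator: "u \<in> VZ m a \<Longrightarrow> j \<in> {1..m} \<Longrightarrow> u - a j \<in> VZ m a"
  unfolding VZ_def by (simp add: realvec_diff span_diff span_base)

lemma finite_int_box: "finite {u :: int^'n. \<forall>i. \<bar>u $ i\<bar> \<le> r i}"
proof (rule finite_subset)
  show "{u :: int^'n. \<forall>i. \<bar>u $ i\<bar> \<le> r i} \<subseteq> vec_lambda ` (\<Pi>\<^sub>E i\<in>UNIV. {- r i..r i})"
    by (auto intro!: image_eqI[of _ _ "vec_nth _"] simp: abs_le_iff minus_le_iff)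
qed (intro finite_imageI finite_PiE; simp)

section \<open>Dual vectors of a linearly independent family\<close>

lemma sum_indicator_scaleR:
  fixes v :: "'i \<Rightarrow> 'a::real_vector"
  shows "finite S \<Longrightarrow> k \<in> S \<Longrightarrow> (\<Sum>j\<in>S. (if j = k then 1 else 0) *\<^sub>R v j) = v k"
  by (simp add: if_distrib[of "\<lambda>c. c *\<^sub>R _"] cong: if_cong)

lemma lin_indep_family_coeffs_eq:
  assumes "lin_indep_family m a" and "k \<in> {1..m}"
    and "(\<Sum>j=1..m. c j *\<^sub>R realvec (a j)) = (\<Sum>j=1..m. d j *\<^sub>R realvec (a j))"
  shows "c k = d k"
proof -
  have "(\<Sum>j=1..m. (c j - d j) *\<^sub>R realvec (a j)) = 0"
    using assms(3) by (simp add: scaleR_diff_left sum_subtractf)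
  then show ?thesis
    using assms(1,2) unfolding lin_indep_family_def by force
qed

lemma lin_indep_family_inj_on:
  assumes "lin_indep_family m a"
  shows "inj_on (\<lambda>j. realvec (a j)) {1..m}"
proof (rule inj_onI)
  fix j k assume j: "j \<in> {1..m}" and k: "k \<in> {1..m}" and eq: "realvec (a j) = realvec (a k)"
  have "(\<Sum>i=1..m. (if i = j then 1 else 0) *\<^sub>R realvec (a i))
      = (\<Sum>i=1..m. (if i = k then 1 else 0) *\<^sub>R realvec (a i))"
    using j k eq by (simp add: sum_indicator_scaleR)
  from lin_indep_family_coeffs_eq[OF assms j this] show "j = k"
    by (auto split: if_splits)
qed

lemma lin_indep_family_independent:
  assumes indep: "lin_indep_family m a"
  shows "independent (realvec ` a ` {1..m})"
proof (rule independent_if_scalars_zero)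
  fix c v
  assume sum0: "(\<Sum>x\<in>realvec ` a ` {1..m}. c x *\<^sub>R x) = 0" and v: "v \<in> realvec ` a ` {1..m}"
  have "(\<Sum>j=1..m. c (realvec (a j)) *\<^sub>R realvec (a j)) = 0"
    using sum0 sum.reindex[OF lin_indep_family_inj_on[OF indep], of "\<lambda>x. c x *\<^sub>R x"]
    by (simp add: image_image)
  then show "c v = 0"
    using indep v unfolding lin_indep_family_def by force
qed simp

lemma linear_eq_inner_Basis_sum:
  fixes g :: "'a::euclidean_space \<Rightarrow> real"
  assumes "linear g"
  shows "g x = x \<bullet> (\<Sum>b\<in>Basis. g b *\<^sub>R b)"
  using Linear_Algebra.linear_componentwise[OF assms, of x 1] by (simp add: inner_sum_right mult.commute)

lemma lin_indep_family_dual_vectors: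
  assumes "lin_indep_family m a"
  obtains y :: "nat \<Rightarrow> real^'n"
  where "\<And>j k. j \<in> {1..m} \<Longrightarrow> k \<in> {1..m} \<Longrightarrow> realvec (a j) \<bullet> y k = (if j = k then 1 else 0)"
proof -
  have "\<exists>g. linear g \<and> (\<forall>x\<in>realvec ` a ` {1..m}. g x = (if x = realvec (a k) then 1 else 0::real))" for k
    by (rule linear_independent_extend[OF lin_indep_family_independent[OF assms]])
  then obtain g :: "nat \<Rightarrow> real^'n \<Rightarrow> real" where g: "\<And>k. linear (g k)"
      "\<And>k x. x \<in> realvec ` a ` {1..m} \<Longrightarrow> g k x = (if x = realvec (a k) then 1 else 0)"
    by metis
  show ?thesis
  proof
    fix j k assume "j \<in> {1..m}" "k \<in> {1..m}"
    then show "realvec (a j) \<bullet> (\<Sum>b\<in>Basis. g k b *\<^sub>R b) = (if j = k then 1 else 0)"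
      using g inj_onD[OF lin_indep_family_inj_on[OF assms]]
      by (auto simp flip: linear_eq_inner_Basis_sum)
  qed
qed

locale dual_system =
  fixes m :: nat and a :: "nat \<Rightarrow> int^'n" and y :: "nat \<Rightarrow> real^'n"
  assumes dual: "j \<in> {1..m} \<Longrightarrow> k \<in> {1..m} \<Longrightarrow> realvec (a j) \<bullet> y k = (if j = k then 1 else 0)"
begin

definition coord :: "nat \<Rightarrow> int^'n \<Rightarrow> real" where
  "coord k u = realvec u \<bullet> y k"

lemma coord_add_generator:
  "j \<in> {1..m} \<Longrightarrow> k \<in> {1..m} \<Longrightarrow> coord k (u + a j) = coord k u + (if j = k then 1 else 0)"
  by (simp add: coord_def realvec_add inner_add_left dual)

lemma coord_diff_generator:
  "j \<in> {1..m} \<Longrightarrow> k \<in> {1..m} \<Longrightarrow> coord k (u - a j) = coord k u - (if j = k then 1 else 0)"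
  by (simp add: coord_def realvec_diff inner_diff_left dual)

lemma combination_inner_dual:
  assumes "k \<in> {1..m}"
  shows "(\<Sum>j=1..m. c j *\<^sub>R realvec (a j)) \<bullet> y k = c k"
  using assms by (simp add: inner_sum_left dual if_distrib[of "\<lambda>t. c _ * t"] cong: if_cong)

lemma span_expansion:
  assumes "x \<in> span (realvec ` a ` {1..m})"
  shows "x = (\<Sum>j=1..m. (x \<bullet> y j) *\<^sub>R realvec (a j))"
proof -
  let ?r = "\<lambda>x. x - (\<Sum>j=1..m. (x \<bullet> y j) *\<^sub>R realvec (a j))"
  have lin: "linear ?r"
    by (rule linearI)
      (simp_all add: inner_add_left scaleR_add_left sum.distrib scaleR_sum_right algebra_simps)
  have gen: "?r v = 0" if "v \<in> realvec ` a ` {1..m}" for v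
  proof -
    from that obtain k where k: "k \<in> {1..m}" and v: "v = realvec (a k)"
      by blast
    have "(\<Sum>j=1..m. (v \<bullet> y j) *\<^sub>R realvec (a j)) = (\<Sum>j=1..m. (if j = k then 1 else 0) *\<^sub>R realvec (a j))"
      using k v by (intro sum.cong) (auto simp: dual)
    with k v show ?thesis
      by (simp add: sum_indicator_scaleR)
  qed
  from linear_eq_0_on_span[OF lin gen assms] show ?thesis
    by simp
qed

lemma VZ_expansion:
  "u \<in> VZ m a \<Longrightarrow> realvec u = (\<Sum>j=1..m. coord j u *\<^sub>R realvec (a j))"
  unfolding VZ_def coord_def using span_expansion by blast

lemma VZ_nth:
  assumes "u \<in> VZ m a"
  shows "real_of_int (u $ i) = (\<Sum>j=1..m. coord j u * real_of_int (a j $ i))"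
proof -
  have "realvec u $ i = (\<Sum>j=1..m. coord j u *\<^sub>R realvec (a j)) $ i"
    using VZ_expansion[OF assms] by simp
  then show ?thesis
    by (simp add: sum_component)
qed

lemma VZ_combination_iff:
  assumes "u \<in> VZ m a"
  shows "(\<exists>c. (\<forall>j\<in>{1..m}. P (c j)) \<and> realvec u = (\<Sum>j=1..m. c j *\<^sub>R realvec (a j)))
    \<longleftrightarrow> (\<forall>j\<in>{1..m}. P (coord j u))"
proof
  assume "\<exists>c. (\<forall>j\<in>{1..m}. P (c j)) \<and> realvec u = (\<Sum>j=1..m. c j *\<^sub>R realvec (a j))"
  then obtain c where P: "\<forall>j\<in>{1..m}. P (c j)" and u: "realvec u = (\<Sum>j=1..m. c j *\<^sub>R realvec (a j))"
    by blast
  have "coord j u = c j" if "j \<in> {1..m}" for j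
    unfolding coord_def u by (rule combination_inner_dual[OF that])
  with P show "\<forall>j\<in>{1..m}. P (coord j u)"
    by simp
next
  assume "\<forall>j\<in>{1..m}. P (coord j u)"
  with VZ_expansion[OF assms] show "\<exists>c. (\<forall>j\<in>{1..m}. P (c j)) \<and> realvec u = (\<Sum>j=1..m. c j *\<^sub>R realvec (a j))"
    by (intro exI[of _ "\<lambda>j. coord j u"]) simp
qed

lemma monoidM_iff: "u \<in> monoidM m a \<longleftrightarrow> u \<in> VZ m a \<and> (\<forall>j\<in>{1..m}. 0 \<le> coord j u)"
  unfolding monoidM_def coneA_def using VZ_combination_iff[of u "\<lambda>t. 0 \<le> t"] by blast

lemma setB_iff:
  "u \<in> setB m a \<longleftrightarrow> u \<in> VZ m a \<and> (\<forall>j\<in>{1..m}. 0 \<le> coord j u \<and> coord j u < 1)"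
  unfolding setB_def parA_def using VZ_combination_iff[of u "\<lambda>t. 0 \<le> t \<and> t < 1"] by blast

lemma finite_setB: "finite (setB m a)"
proof (rule finite_subset[OF _ finite_int_box])
  show "setB m a \<subseteq> {u. \<forall>i. \<bar>u $ i\<bar> \<le> (\<Sum>j=1..m. \<bar>a j $ i\<bar>)}"
  proof (intro subsetI CollectI allI)
    fix u i assume "u \<in> setB m a"
    then have u: "u \<in> VZ m a" and c: "\<And>j. j \<in> {1..m} \<Longrightarrow> 0 \<le> coord j u \<and> coord j u < 1"
      by (auto simp: setB_iff)
    have "\<bar>real_of_int (u $ i)\<bar> \<le> (\<Sum>j=1..m. \<bar>coord j u\<bar> * \<bar>real_of_int (a j $ i)\<bar>)"
      unfolding VZ_nth[OF u] abs_mult[symmetric] by (rule sum_abs)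
    also have "\<dots> \<le> (\<Sum>j=1..m. \<bar>real_of_int (a j $ i)\<bar>)"
      by (intro sum_mono mult_left_le_one_le) (use c in force)+
    finally have "real_of_int \<bar>u $ i\<bar> \<le> real_of_int (\<Sum>j=1..m. \<bar>a j $ i\<bar>)"
      by simp
    then show "\<bar>u $ i\<bar> \<le> (\<Sum>j=1..m. \<bar>a j $ i\<bar>)"
      by (simp only: of_int_le_iff)
  qed
qed

end

lemma sum_mono_times:
  "finite F \<Longrightarrow> (\<Sum>w\<in>F. mono v w * W w) = (if v \<in> F then W v else 0)"
  by (simp add: mono_def if_distrib[of "\<lambda>c. c * _"] cong: if_cong)

lemma mono_expansion:
  assumes "finite F" and "{u. g u \<noteq> 0} \<subseteq> F"
  shows "g w = (\<Sum>u\<in>F. g u * mono u w)"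
  using assms by (auto simp: mono_def if_distrib[of "\<lambda>c. _ * c"] cong: if_cong)

lemma mono_support [simp]: "{w. mono b w \<noteq> 0} = {b}"
  by (auto simp: mono_def)

lemma mono_in_S0: "u \<in> monoidM m a \<Longrightarrow> mono u \<in> S0 m a"
  by (simp add: S0_def mono_def)

lemma S0_add:
  assumes "g \<in> S0 m a" and "h \<in> S0 m a"
  shows "(\<lambda>w. g w + h w) \<in> S0 m a"
proof -
  have sub: "{u. g u + h u \<noteq> 0} \<subseteq> {u. g u \<noteq> 0} \<union> {u. h u \<noteq> 0}"
    by auto
  with assms show ?thesis
    unfolding S0_def using finite_subset[OF sub] by blast
qed

lemma S0_scale: "g \<in> S0 m a \<Longrightarrow> (\<lambda>w. c * g w) \<in> S0 m a"
  unfolding S0_def by (auto intro: finite_subset[of _ "{u. g u \<noteq> 0}"])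

lemma Dop_add: "Dop m a l i (\<lambda>v. g v + h v) w = Dop m a l i g w + Dop m a l i h w"
  unfolding Dop_def by (simp add: algebra_simps sum.distrib)

lemma Dop_scale: "Dop m a l i (\<lambda>v. c * g v) w = c * Dop m a l i g w"
  unfolding Dop_def by (simp add: algebra_simps sum_distrib_left)

lemma Dop_lincomb:
  "finite X \<Longrightarrow> Dop m a l i (\<lambda>v. \<Sum>x\<in>X. c x * h x v) w = (\<Sum>x\<in>X. c x * Dop m a l i (h x) w)"
  by (induction X rule: finite_induct) (simp_all add: Dop_add Dop_scale, simp add: Dop_def)

lemma Dop_mono:
  "Dop m a l i (mono u) w
    = of_int (u $ i) * mono u w + (\<Sum>j=1..m. of_nat (l j) * of_int (a j $ i) * mono (u + a j) w)"
  by (simp add: Dop_def mono_def diff_eq_eq)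

lemma Dop_finite_support:
  assumes "finite {u. g u \<noteq> 0}"
  shows "finite {w. Dop m a l i g w \<noteq> 0}"
proof (rule finite_subset)
  show "{w. Dop m a l i g w \<noteq> 0} \<subseteq> {u. g u \<noteq> 0} \<union> (\<Union>j\<in>{1..m}. (\<lambda>w. w - a j) -` {u. g u \<noteq> 0})"
    by (auto simp: Dop_def dest!: sum.not_neutral_contains_not_neutral)
  show "finite ({u. g u \<noteq> 0} \<union> (\<Union>j\<in>{1..m}. (\<lambda>w. w - a j) -` {u. g u \<noteq> 0}))"
    using assms by (intro finite_UnI finite_UN_I finite_vimageI) (auto intro: inj_onI)
qed

lemma Dsum_0: "(\<lambda>w. 0) \<in> Dsum m a l"
  unfolding Dsum_def by (rule CollectI, rule exI[of _ "\<lambda>i w. 0"]) (simp add: S0_def Dop_def)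

lemma Dsum_add:
  assumes "g \<in> Dsum m a l" and "h \<in> Dsum m a l"
  shows "(\<lambda>w. g w + h w) \<in> Dsum m a l"
proof -
  obtain G H where "\<forall>i. G i \<in> S0 m a" "g = (\<lambda>w. \<Sum>i\<in>UNIV. Dop m a l i (G i) w)"
    and "\<forall>i. H i \<in> S0 m a" "h = (\<lambda>w. \<Sum>i\<in>UNIV. Dop m a l i (H i) w)"
    using assms unfolding Dsum_def by blast
  then show ?thesis
    unfolding Dsum_def
    by (intro CollectI exI[of _ "\<lambda>i w. G i w + H i w"]) (simp add: S0_add Dop_add sum.distrib)
qed

lemma Dsum_scale:
  assumes "g \<in> Dsum m a l"
  shows "(\<lambda>w. c * g w) \<in> Dsum m a l"
proof -
  obtain G where "\<forall>i. G i \<in> S0 m a" "g = (\<lambda>w. \<Sum>i\<in>UNIV. Dop m a l i (G i) w)"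
    using assms unfolding Dsum_def by blast
  then show ?thesis
    unfolding Dsum_def
    by (intro CollectI exI[of _ "\<lambda>i w. c * G i w"]) (simp add: S0_scale Dop_scale sum_distrib_left)
qed

lemma Dsum_lincomb:
  "finite X \<Longrightarrow> (\<And>x. x \<in> X \<Longrightarrow> h x \<in> Dsum m a l) \<Longrightarrow> (\<lambda>w. \<Sum>x\<in>X. c x * h x w) \<in> Dsum m a l"
  by (induction X rule: finite_induct) (simp_all add: Dsum_0 Dsum_add Dsum_scale)

definition pairing :: "(int^'n \<Rightarrow> complex) \<Rightarrow> (int^'n \<Rightarrow> complex) \<Rightarrow> complex" where
  "pairing W g = (\<Sum>u\<in>{u. g u \<noteq> 0}. g u * W u)"

lemma pairing_eq_sum:
  assumes "finite F" and "{u. g u \<noteq> 0} \<subseteq> F"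
  shows "pairing W g = (\<Sum>u\<in>F. g u * W u)"
  unfolding pairing_def by (rule sum.mono_neutral_left[OF assms]) auto

lemma pairing_mono: "pairing W (mono v) = W v"
  using pairing_eq_sum[of "{v}" "mono v" W] by (simp add: mono_def)

lemma pairing_lincomb:
  assumes "finite X" and "\<And>x. x \<in> X \<Longrightarrow> finite {u. h x u \<noteq> 0}"
  shows "pairing W (\<lambda>w. \<Sum>x\<in>X. c x * h x w) = (\<Sum>x\<in>X. c x * pairing W (h x))"
proof -
  define F where "F = (\<Union>x\<in>X. {u. h x u \<noteq> 0})"
  have F: "finite F"
    unfolding F_def using assms by blast
  have "(\<Sum>x\<in>X. c x * h x u) = 0" if "u \<notin> F" for u
    using that unfolding F_def by (auto intro: sum.neutral)
  then have "pairing W (\<lambda>w. \<Sum>x\<in>X. c x * h x w) = (\<Sum>u\<in>F. (\<Sum>x\<in>X. c x * h x u) * W u)"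
    by (intro pairing_eq_sum F) blast
  also have "\<dots> = (\<Sum>x\<in>X. c x * (\<Sum>u\<in>F. h x u * W u))"
    by (simp add: sum_distrib_left sum_distrib_right mult.assoc sum.swap[of _ F])
  also have "\<dots> = (\<Sum>x\<in>X. c x * pairing W (h x))"
    by (intro sum.cong refl arg_cong[where f = "times _"] pairing_eq_sum[symmetric] F) (auto simp: F_def)
  finally show ?thesis .
qed

lemma pairing_Dop_mono:
  "pairing W (Dop m a l i (mono u))
    = of_int (u $ i) * W u + (\<Sum>j=1..m. of_nat (l j) * of_int (a j $ i) * W (u + a j))"
proof -
  define F where "F = insert u ((\<lambda>j. u + a j) ` {1..m})"
  have F: "finite F" "u \<in> F" "\<And>j. j \<in> {1..m} \<Longrightarrow> u + a j \<in> F"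
    by (auto simp: F_def)
  have "Dop m a l i (mono u) w = 0" if "w \<notin> F" for w
    using that unfolding Dop_mono by (auto simp: F_def mono_def intro!: sum.neutral)
  then have "{w. Dop m a l i (mono u) w \<noteq> 0} \<subseteq> F"
    by blast
  then have "pairing W (Dop m a l i (mono u)) = (\<Sum>w\<in>F. Dop m a l i (mono u) w * W w)"
    by (rule pairing_eq_sum[OF F(1)])
  also have "\<dots> = of_int (u $ i) * (\<Sum>w\<in>F. mono u w * W w)
      + (\<Sum>j=1..m. of_nat (l j) * of_int (a j $ i) * (\<Sum>w\<in>F. mono (u + a j) w * W w))"
    by (simp add: Dop_mono algebra_simps sum.distrib sum_distrib_left sum_distrib_right sum.swap[of _ F])
  also have "\<dots> = of_int (u $ i) * W u + (\<Sum>j=1..m. of_nat (l j) * of_int (a j $ i) * W (u + a j))"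
    using F by (simp add: sum_mono_times)
  finally show ?thesis .
qed

lemma pairing_Dop_eq_0:
  assumes W: "\<And>u. u \<in> monoidM m a \<Longrightarrow> pairing W (Dop m a l i (mono u)) = 0"
    and g: "g \<in> S0 m a"
  shows "pairing W (Dop m a l i g) = 0"
proof -
  let ?F = "{u. g u \<noteq> 0}"
  have F: "finite ?F" "?F \<subseteq> monoidM m a"
    using g by (auto simp: S0_def)
  have "Dop m a l i g = Dop m a l i (\<lambda>v. \<Sum>u\<in>?F. g u * mono u v)"
    using mono_expansion[OF F(1)] by (intro arg_cong[where f = "Dop m a l i"]) auto
  also have "\<dots> = (\<lambda>w. \<Sum>u\<in>?F. g u * Dop m a l i (mono u) w)"
    using Dop_lincomb[OF F(1)] by blast
  finally have "pairing W (Dop m a l i g) = (\<Sum>u\<in>?F. g u * pairing W (Dop m a l i (mono u)))"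
    using F(1) by (simp add: pairing_lincomb Dop_finite_support mono_def)
  also have "\<dots> = 0"
    using F(2) by (intro sum.neutral) (simp add: W subset_iff)
  finally show ?thesis .
qed

lemma pairing_Dsum_eq_0:
  assumes W: "\<And>u i. u \<in> monoidM m a \<Longrightarrow> pairing W (Dop m a l i (mono u)) = 0"
    and h: "h \<in> Dsum m a l"
  shows "pairing W h = 0"
proof -
  obtain G where G: "\<And>i. G i \<in> S0 m a" and h_eq: "h = (\<lambda>w. \<Sum>i\<in>UNIV. 1 * Dop m a l i (G i) w)"
    using h unfolding Dsum_def by auto
  have "pairing W h = (\<Sum>i\<in>UNIV. 1 * pairing W (Dop m a l i (G i)))"
    unfolding h_eq using G by (intro pairing_lincomb) (auto simp: S0_def intro: Dop_finite_support)
  also have "\<dots> = 0"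
    using pairing_Dop_eq_0[OF W G] by simp
  finally show ?thesis .
qed

section \<open>Reduction modulo the image of the D_i\<close>

context dual_system
begin

lemma Dsum_coord_relation:
  assumes g: "g \<in> S0 m a" and k: "k \<in> {1..m}"
  shows "(\<lambda>w. of_real (coord k w) * g w + of_nat (l k) * g (w - a k)) \<in> Dsum m a l"
proof -
  define v where "v i = complex_of_real (y k $ i)" for i
  have coord_eq: "complex_of_real (coord k u) = (\<Sum>i\<in>UNIV. of_int (u $ i) * v i)" for u
    by (simp add: coord_def inner_vec_def v_def)
  have dual_v: "(\<Sum>i\<in>UNIV. of_int (a j $ i) * v i) = (if j = k then 1 else 0)" if "j \<in> {1..m}" for j
    using dual[OF that k] by (simp add: coord_eq[symmetric] coord_def)
  have "(\<Sum>i\<in>UNIV. Dop m a l i (\<lambda>w. v i * g w) w)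
      = of_real (coord k w) * g w + of_nat (l k) * g (w - a k)" for w
  proof -
    have "(\<Sum>i\<in>UNIV. Dop m a l i (\<lambda>w. v i * g w) w)
        = (\<Sum>i\<in>UNIV. of_int (w $ i) * v i) * g w
          + (\<Sum>j=1..m. of_nat (l j) * (\<Sum>i\<in>UNIV. of_int (a j $ i) * v i) * g (w - a j))"
      by (simp add: Dop_def sum.distrib sum_distrib_left sum_distrib_right algebra_simps
          sum.swap[of _ UNIV])
    also have "\<dots> = of_real (coord k w) * g w + of_nat (l k) * g (w - a k)"
      using k by (simp add: coord_eq dual_v if_distrib[of "\<lambda>t. _ * t * _"] cong: if_cong)
    finally show ?thesis .
  qed
  with g show ?thesis
    unfolding Dsum_def by (intro CollectI exI[of _ "\<lambda>i w. v i * g w"]) (simp add: S0_scale)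
qed

definition height :: "int^'n \<Rightarrow> nat" where
  "height u = (\<Sum>k=1..m. nat \<lfloor>coord k u\<rfloor>)"

lemma height_add_generator:
  assumes u: "u \<in> monoidM m a" and j: "j \<in> {1..m}"
  shows "height (u + a j) = Suc (height u)"
proof -
  have "height (u + a j) = (\<Sum>k=1..m. nat \<lfloor>coord k u\<rfloor> + (if j = k then 1 else 0))"
    unfolding height_def
  proof (rule sum.cong)
    fix k assume k: "k \<in> {1..m}"
    then have "0 \<le> coord k u"
      using u by (simp add: monoidM_iff)
    then show "nat \<lfloor>coord k (u + a j)\<rfloor> = nat \<lfloor>coord k u\<rfloor> + (if j = k then 1 else 0)"
      by (simp add: coord_add_generator[OF j k] nat_add_distrib)
  qed simp
  also have "\<dots> = Suc (height u)"
    using j by (simp add: sum.distrib height_def)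
  finally show ?thesis .
qed

end

locale weighted_dual_system = dual_system m a y
  for m :: nat and a :: "nat \<Rightarrow> int^'n" and y :: "nat \<Rightarrow> real^'n" +
  fixes l :: "nat \<Rightarrow> nat"
  assumes l_pos: "j \<in> {1..m} \<Longrightarrow> 0 < l j"
begin

lemma Dsum_mono_add_generator:
  assumes u: "u \<in> monoidM m a" and k: "k \<in> {1..m}"
  shows "(\<lambda>w. mono (u + a k) w + of_real (coord k u) / of_nat (l k) * mono u w) \<in> Dsum m a l"
proof -
  have eq: "(\<lambda>w. (1 / of_nat (l k)) * (of_real (coord k w) * mono u w + of_nat (l k) * mono u (w - a k)))
      = (\<lambda>w. mono (u + a k) w + of_real (coord k u) / of_nat (l k) * mono u w)"
    using l_pos[OF k] by (auto simp: fun_eq_iff mono_def diff_eq_eq add_divide_distrib)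
  from Dsum_scale[OF Dsum_coord_relation[where l = l, OF mono_in_S0[OF u] k], of "1 / of_nat (l k)"] show ?thesis
    unfolding eq .
qed

lemma Dsum_reduction_add_generator:
  assumes u: "u \<in> monoidM m a" and k: "k \<in> {1..m}"
    and c: "(\<lambda>w. mono u w - (\<Sum>b\<in>setB m a. c b * mono b w)) \<in> Dsum m a l"
  defines "r \<equiv> of_real (coord k u) / of_nat (l k)"
  shows "(\<lambda>w. mono (u + a k) w - (\<Sum>b\<in>setB m a. (- r * c b) * mono b w)) \<in> Dsum m a l"
proof -
  have "(\<lambda>w. (mono (u + a k) w + r * mono u w) + (- r) * (mono u w - (\<Sum>b\<in>setB m a. c b * mono b w)))
      \<in> Dsum m a l"
    using Dsum_add[OF Dsum_mono_add_generator[OF u k] Dsum_scale[OF c, of "- r"]]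
    unfolding r_def .
  moreover have "(\<lambda>w. (mono (u + a k) w + r * mono u w) + (- r) * (mono u w - (\<Sum>b\<in>setB m a. c b * mono b w)))
      = (\<lambda>w. mono (u + a k) w - (\<Sum>b\<in>setB m a. (- r * c b) * mono b w))"
    by (simp add: fun_eq_iff algebra_simps sum_distrib_left)
  ultimately show ?thesis
    by simp
qed

lemma mono_reduces_to_setB:
  assumes "u \<in> monoidM m a"
  shows "\<exists>c. (\<lambda>w. mono u w - (\<Sum>b\<in>setB m a. c b * mono b w)) \<in> Dsum m a l"
  using assms
proof (induction "height u" arbitrary: u rule: less_induct)
  case less
  then have u: "u \<in> VZ m a" and nonneg: "\<forall>j\<in>{1..m}. 0 \<le> coord j u"
    by (auto simp: monoidM_iff)
  show ?case
  proof (cases "u \<in> setB m a")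
    case True
    then have "(\<lambda>w. mono u w - (\<Sum>b\<in>setB m a. (if b = u then 1 else 0) * mono b w)) = (\<lambda>w. 0)"
      using finite_setB by (simp add: if_distrib[of "\<lambda>c. c * _"] cong: if_cong)
    then have "(\<lambda>w. mono u w - (\<Sum>b\<in>setB m a. (if b = u then 1 else 0) * mono b w)) \<in> Dsum m a l"
      using Dsum_0 by simp
    then show ?thesis
      by - (rule exI)
  next
    case False
    then obtain k where k: "k \<in> {1..m}" and "1 \<le> coord k u"
      using u nonneg by (auto simp: setB_iff not_less)
    define u' where "u' = u - a k"
    have "coord j u' = coord j u - (if k = j then 1 else 0)" if "j \<in> {1..m}" for j
      using coord_diff_generator[OF k that] by (simp add: u'_def)
    then have u': "u' \<in> monoidM m a"
      using VZ_diff_generator[OF u k] nonneg \<open>1 \<le> coord k u\<close> by (auto simp: monoidM_iff u'_def)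
    have u_eq: "u = u' + a k"
      by (simp add: u'_def)
    obtain c where "(\<lambda>w. mono u' w - (\<Sum>b\<in>setB m a. c b * mono b w)) \<in> Dsum m a l"
      using less.hyps[OF _ u'] height_add_generator[OF u' k] u_eq by auto
    from Dsum_reduction_add_generator[OF u' k this] show ?thesis
      unfolding u_eq[symmetric] by - (rule exI)
  qed
qed

lemma S0_reduces_to_setB:
  assumes g: "g \<in> S0 m a"
  shows "\<exists>c. (\<lambda>w. g w - (\<Sum>b\<in>setB m a. c b * mono b w)) \<in> Dsum m a l"
proof -
  let ?F = "{u. g u \<noteq> 0}"
  have F: "finite ?F" "?F \<subseteq> monoidM m a"
    using g by (auto simp: S0_def)
  have "\<forall>u\<in>monoidM m a. \<exists>c. (\<lambda>w. mono u w - (\<Sum>b\<in>setB m a. c b * mono b w)) \<in> Dsum m a l"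
    using mono_reduces_to_setB by blast
  from bchoice[OF this] obtain C
    where C: "\<forall>u\<in>monoidM m a. (\<lambda>w. mono u w - (\<Sum>b\<in>setB m a. C u b * mono b w)) \<in> Dsum m a l"
    by blast
  have mem: "(\<lambda>w. \<Sum>u\<in>?F. g u * (mono u w - (\<Sum>b\<in>setB m a. C u b * mono b w))) \<in> Dsum m a l"
    using F C by (intro Dsum_lincomb) auto
  have eq: "(\<lambda>w. \<Sum>u\<in>?F. g u * (mono u w - (\<Sum>b\<in>setB m a. C u b * mono b w)))
      = (\<lambda>w. g w - (\<Sum>b\<in>setB m a. (\<Sum>u\<in>?F. g u * C u b) * mono b w))"
    using mono_expansion[OF F(1)]
    by (simp add: fun_eq_iff right_diff_distrib sum_subtractf sum_distrib_left sum_distrib_right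
        mult.assoc sum.swap[of _ ?F])
  show ?thesis
    using mem unfolding eq by - (rule exI)
qed

end

section \<open>Weights annihilating the image of the D_i\<close>

context dual_system
begin

definition par_rep :: "int^'n \<Rightarrow> int^'n" where
  "par_rep u = u - (\<Sum>k=1..m. \<lfloor>coord k u\<rfloor> *s a k)"

lemma par_rep_add_generator:
  assumes j: "j \<in> {1..m}"
  shows "par_rep (u + a j) = par_rep u"
proof -
  have "(\<Sum>k=1..m. \<lfloor>coord k (u + a j)\<rfloor> *s a k) = (\<Sum>k=1..m. \<lfloor>coord k u\<rfloor> *s a k + (if j = k then a k else 0))"
    by (intro sum.cong) (simp_all add: coord_add_generator[OF j] algebra_simps)
  also have "\<dots> = (\<Sum>k=1..m. \<lfloor>coord k u\<rfloor> *s a k) + a j"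
    using j by (simp add: sum.distrib)
  finally show ?thesis
    by (simp add: par_rep_def)
qed

lemma floor_coord_setB: "b \<in> setB m a \<Longrightarrow> k \<in> {1..m} \<Longrightarrow> \<lfloor>coord k b\<rfloor> = 0"
  by (simp add: setB_iff floor_eq_iff)

lemma par_rep_setB: "b \<in> setB m a \<Longrightarrow> par_rep b = b"
  by (simp add: par_rep_def floor_coord_setB)

end

context weighted_dual_system
begin

definition weight_factor :: "nat \<Rightarrow> real \<Rightarrow> complex" where
  "weight_factor k c = (- 1 / of_nat (l k)) ^ nat \<lfloor>c\<rfloor> * pochhammer (of_real (frac c)) (nat \<lfloor>c\<rfloor>)"

lemma weight_factor_step:
  assumes "0 \<le> c"
  shows "weight_factor k (c + 1) = - (of_real c / of_nat (l k)) * weight_factor k c"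
proof -
  have n: "nat \<lfloor>c + 1\<rfloor> = Suc (nat \<lfloor>c\<rfloor>)"
    using assms by (simp add: nat_add_distrib)
  have c: "of_real (frac c) + of_nat (nat \<lfloor>c\<rfloor>) = (of_real c :: complex)"
    using assms by (simp add: frac_def)
  show ?thesis
    unfolding weight_factor_def n frac_1_eq pochhammer_Suc c by simp
qed

definition weight :: "int^'n \<Rightarrow> int^'n \<Rightarrow> complex" where
  "weight b0 u = (if par_rep u = b0 then \<Prod>k\<in>{1..m}. weight_factor k (coord k u) else 0)"

lemma weight_add_generator:
  assumes u: "u \<in> monoidM m a" and j: "j \<in> {1..m}"
  shows "weight b0 (u + a j) = - (of_real (coord j u) / of_nat (l j)) * weight b0 u"
proof -
  have "(\<Prod>k\<in>{1..m}. weight_factor k (coord k (u + a j)))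
      = (\<Prod>k\<in>{1..m}. (if k = j then - (of_real (coord j u) / of_nat (l j)) else 1) * weight_factor k (coord k u))"
  proof (rule prod.cong)
    fix k assume k: "k \<in> {1..m}"
    then have "0 \<le> coord k u"
      using u by (simp add: monoidM_iff)
    then show "weight_factor k (coord k (u + a j))
        = (if k = j then - (of_real (coord j u) / of_nat (l j)) else 1) * weight_factor k (coord k u)"
      by (auto simp: coord_add_generator[OF j k] weight_factor_step)
  qed simp
  also have "\<dots> = - (of_real (coord j u) / of_nat (l j)) * (\<Prod>k\<in>{1..m}. weight_factor k (coord k u))"
    using j by (simp add: prod.distrib)
  finally show ?thesis
    by (simp add: weight_def par_rep_add_generator[OF j])
qed

lemma weight_setB:
  assumes b: "b \<in> setB m a"
  shows "weight b0 b = (if b = b0 then 1 else 0)"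
proof -
  have "(\<Prod>k\<in>{1..m}. weight_factor k (coord k b)) = 1"
    by (rule prod.neutral) (simp add: weight_factor_def floor_coord_setB[OF b])
  then show ?thesis
    by (auto simp: weight_def par_rep_setB[OF b])
qed

lemma pairing_weight_Dop_mono:
  assumes u: "u \<in> monoidM m a"
  shows "pairing (weight b0) (Dop m a l i (mono u)) = 0"
proof -
  have u_i: "complex_of_int (u $ i) = (\<Sum>j=1..m. of_real (coord j u) * of_int (a j $ i))"
    using arg_cong[where f = complex_of_real, OF VZ_nth[of u i]] u by (simp add: monoidM_iff)
  have "(\<Sum>j=1..m. of_nat (l j) * of_int (a j $ i) * weight b0 (u + a j))
      = (\<Sum>j=1..m. - (of_real (coord j u) * of_int (a j $ i) * weight b0 u))"
  proof (rule sum.cong)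
    fix j assume j: "j \<in> {1..m}"
    show "of_nat (l j) * of_int (a j $ i) * weight b0 (u + a j)
        = - (of_real (coord j u) * of_int (a j $ i) * weight b0 u)"
      using l_pos[OF j] by (simp add: weight_add_generator[OF u j])
  qed simp
  also have "\<dots> = - (of_int (u $ i) * weight b0 u)"
    by (simp add: u_i sum_negf sum_distrib_right)
  finally show ?thesis
    by (simp add: pairing_Dop_mono)
qed

lemma setB_lincomb_in_Dsum_imp_zero:
  assumes "(\<lambda>w. \<Sum>b\<in>setB m a. c b * mono b w) \<in> Dsum m a l" and b0: "b0 \<in> setB m a"
  shows "c b0 = 0"
proof -
  have "0 = pairing (weight b0) (\<lambda>w. \<Sum>b\<in>setB m a. c b * mono b w)"
    using pairing_Dsum_eq_0[OF pairing_weight_Dop_mono assms(1)] by simp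
  also have "\<dots> = (\<Sum>b\<in>setB m a. c b * weight b0 b)"
    using finite_setB by (simp add: pairing_lincomb pairing_mono)
  also have "\<dots> = c b0"
    using finite_setB b0 by (simp add: weight_setB if_distrib[of "\<lambda>t. _ * t"] cong: if_cong)
  finally show ?thesis
    by simp
qed

end

theorem proposition3p9:
  fixes m :: nat and a :: "nat \<Rightarrow> int^'n" and l :: "nat \<Rightarrow> nat" and a0 :: "int^'n"
  assumes indep: "lin_indep_family m a"
    and lpos: "\<forall>j\<in>{1..m}. 0 < l j"
    and rel: "\<forall>i. int (\<Sum>j=1..m. l j) * (a0 $ i) = (\<Sum>j=1..m. int (l j) * (a j $ i))"
    and gcd1: "Gcd (insert (\<Sum>j=1..m. l j) (l ` {1..m})) = 1"
  shows "quotient_basis (S0 m a) (Dsum m a l) (setB m a)"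
proof -
  obtain y where "\<And>j k. j \<in> {1..m} \<Longrightarrow> k \<in> {1..m} \<Longrightarrow> realvec (a j) \<bullet> y k = (if j = k then 1 else 0)"
    using lin_indep_family_dual_vectors[OF indep] by blast
  with lpos interpret weighted_dual_system m a y l
    by unfold_locales auto
  show ?thesis
    unfolding quotient_basis_def
    using finite_setB S0_reduces_to_setB setB_lincomb_in_Dsum_imp_zero by blast
qed

end
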